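(* In Model B$_K$ below, assume $l\to\infty$ and $lp\to0$ as $d\to\infty$. Then for the $c$-segmentation rule with $c=d/l$, $$\mathbb{P}(w\text{ is misclassified})\to0\quad\text{as }d\to\infty.$$
   Context: Segmentation rule. Let $d,c$ be positive integers with $c\mid d$. For $x\in\mathbb{R}^d$ and $1\le j\le c$ let $x_j\in\mathbb{R}^{d/c}$ denote its $j$-th block $(x_{(j-1)d/c+1},\dots,x_{jd/c})$, so that $x=x_1\circ\cdots\circ x_c$ (concatenation). Given dictionary words $w^1,\dots,w^K\in\mathbb{R}^d$ ($w^k$ representing class $k$) and a test word $w\in\mathbb{R}^d$, for each $j$ let $U_j\in\{1,\dots,K\}$ be an index $k$ minimizing the Euclidean distance $\|w_j-w^k_j\|$ in $\mathbb{R}^{d/c}$, chosen uniformly at random among all minimizers (independently of everything else). The $c$-segmentation rule assigns to $w$ the class $\chi(w)\in\operatorname{argmax}_k\#\{j:U_j=k\}$, chosen uniformly at random among all maximizers. The case $c=1$ is the Euclidean (nearest-neighbour) rule and $c=d$ is coordinate-by-coordinate comparison. $w$ is classified correctly if $\chi(w)$ equals its true class, misclassified otherwise. Probabilities are over all random objects including tie-breaks. Model B$_K$. Let $d\ge1$, an integer $l\ge1$ with $l\mid d$, $N>0$, $p\in(0,1)$ (possibly depending on $d$) and a fixed integer $2\le K\le l+1$ be given. Split $\{1,\dots,d\}$ into the $d/l$ consecutive blocks $B_t=\{(t-1)l+1,\dots,tl\}$. Let $m_1=0\in\mathbb{R}^d$ and, for $k=2,\dots,K$, let $m_k\in\{0,1\}^d$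 be such that in every block $B_t$ exactly one coordinate of $m_k$ equals $1$ and all others equal $0$, the position of this $1$ inside $B_t$ being different for different $k$. Let $Y^{(0)},Y^{(1)},\dots,Y^{(K)}$ be independent random vectors in $\mathbb{R}^d$, each with i.i.d. coordinates satisfying $\mathbb{P}(Y_i=N)=p$, $\mathbb{P}(Y_i=0)=1-p$. The dictionary words are $w^k=m_k+Y^{(k)}$ (class $k$), $k=1,\dots,K$, and the test word is $w=m_1+Y^{(0)}$ (true class 1). *)

theory Defs
  imports "HOL-Probability.Probability"
begin

text \<open>Coordinates are 0-indexed: a vector in R^d is a function nat => real,
  only the values at i < d matter. Segment j (0 <= j < c) of length s = d div c
  is the index set {j*s ..< (j+1)*s}.\<close>

definition block_dist :: "nat \<Rightarrow> nat \<Rightarrow> (nat \<Rightarrow> real) \<Rightarrow> (nat \<Rightarrow> real) \<Rightarrow> real" where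
  "block_dist s j x y = sqrt (\<Sum>i\<in>{j * s ..< (j+1) * s}. (x i - y i)^2)"

definition nearest_classes ::
  "nat \<Rightarrow> nat \<Rightarrow> nat \<Rightarrow> (nat \<Rightarrow> nat \<Rightarrow> real) \<Rightarrow> (nat \<Rightarrow> real) \<Rightarrow> nat set" where
  "nearest_classes K s j dict w =
     {k\<in>{1..K}. \<forall>k'\<in>{1..K}. block_dist s j w (dict k) \<le> block_dist s j w (dict k')}"

definition votes :: "nat \<Rightarrow> (nat \<Rightarrow> nat) \<Rightarrow> nat \<Rightarrow> nat" where
  "votes c u k = card {j\<in>{..<c}. u j = k}"

definition winners :: "nat \<Rightarrow> nat \<Rightarrow> (nat \<Rightarrow> nat) \<Rightarrow> nat set" where
  "winners K c u = {k\<in>{1..K}. \<forall>k'\<in>{1..K}. votes c u k' \<le> votes c u k}"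

text \<open>Distribution of the class chi(w) assigned by the c-segmentation rule
  (including both uniform tie-breaks; the U_j are independent).\<close>
definition seg_rule ::
  "nat \<Rightarrow> nat \<Rightarrow> nat \<Rightarrow> (nat \<Rightarrow> nat \<Rightarrow> real) \<Rightarrow> (nat \<Rightarrow> real) \<Rightarrow> nat pmf" where
  "seg_rule d c K dict w =
     bind_pmf (Pi_pmf {..<c} 0 (\<lambda>j. pmf_of_set (nearest_classes K (d div c) j dict w)))
              (\<lambda>u. pmf_of_set (winners K c u))"

definition modelB_means :: "nat \<Rightarrow> nat \<Rightarrow> nat \<Rightarrow> (nat \<Rightarrow> nat \<Rightarrow> real) \<Rightarrow> bool" where
  "modelB_means d l K m \<longleftrightarrow>
     (\<forall>i<d. m 1 i = 0) \<and>
     (\<forall>k\<in>{2..K}. \<forall>i<d. m k i = 0 \<or> m k i = 1) \<and>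
     (\<forall>k\<in>{2..K}. \<forall>t<d div l. \<exists>!i. i \<in> {t * l ..< (t+1) * l} \<and> m k i = 1) \<and>
     (\<forall>k\<in>{2..K}. \<forall>k'\<in>{2..K}. k \<noteq> k' \<longrightarrow> (\<forall>i<d. \<not> (m k i = 1 \<and> m k' i = 1)))"

definition noise_pmf :: "nat \<Rightarrow> real \<Rightarrow> real \<Rightarrow> (nat \<Rightarrow> real) pmf" where
  "noise_pmf d N p = Pi_pmf {..<d} 0 (\<lambda>_. map_pmf (\<lambda>b. if b then N else 0) (bernoulli_pmf p))"

text \<open>Misclassification probability in Model B_K for the c-segmentation rule:
  Y 0, ..., Y K independent; dictionary words m k + Y k; test word m 1 + Y 0 (true class 1).\<close>
definition modelB_error ::
  "nat \<Rightarrow> real \<Rightarrow> real \<Rightarrow> nat \<Rightarrow> (nat \<Rightarrow> nat \<Rightarrow> real) \<Rightarrow> nat \<Rightarrow> real" where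
  "modelB_error d N p K m c = measure_pmf.prob
     (bind_pmf (Pi_pmf {..K} (\<lambda>_. 0) (\<lambda>_. noise_pmf d N p))
        (\<lambda>Y. seg_rule d c K (\<lambda>k i. m k i + Y k i) (\<lambda>i. m 1 i + Y 0 i)))
     {k. k \<noteq> 1}"

end

theory Submission
  imports Defs
begin

text \<open>Call a block of c = d / l clean if all K + 1 noise vectors vanish on it. On a clean block
  the test word equals the class-1 word, while every other class word carries a 1 there, so
  class 1 is the unique nearest class. If more than half of the blocks are clean, class 1 wins
  the vote outright. A block is noisy with probability at most (K + 1) l p by the union bound,
  so by Markov's inequality at least half the blocks are noisy with probability at most
  2 (K + 1) l p, which tends to 0.\<close>

lemma nearest_classes_nonempty:
  assumes "1 \<le> K"
  shows "nearest_classes K s j dict w \<noteq> {}"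
proof -
  define f where "f k = block_dist s j w (dict k)" for k
  have "Min (f ` {1..K}) \<in> f ` {1..K}"
    using assms by (intro Min_in) auto
  then obtain k where "k \<in> {1..K}" "f k = Min (f ` {1..K})"
    by auto
  then show ?thesis
    unfolding nearest_classes_def f_def[symmetric] by auto
qed

lemma winners_eq_singleton_of_majority:
  assumes k: "k \<in> {1..K}" and C: "C \<subseteq> {..<c}" "c < 2 * card C"
    and u: "\<forall>t\<in>C. u t = k"
  shows "winners K c u = {k}"
proof -
  have beats: "votes c u k' < votes c u k" if "k' \<noteq> k" for k'
  proof -
    have "votes c u k' \<le> card ({..<c} - C)"
      unfolding votes_def using u that by (intro card_mono) auto
    also have "\<dots> = c - card C"
      using C by (simp add: card_Diff_subset finite_subset)
    also have "\<dots> < card C"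
      using C(2) by linarith
    also have "\<dots> \<le> votes c u k"
      unfolding votes_def using C u by (intro card_mono) auto
    finally show ?thesis .
  qed
  have le: "votes c u k' \<le> votes c u k" for k'
    using beats by (cases "k' = k") (auto intro: less_imp_le)
  have "x \<in> winners K c u \<longleftrightarrow> x = k" for x
  proof
    assume "x \<in> winners K c u"
    then have "votes c u k \<le> votes c u x"
      using k unfolding winners_def by blast
    then show "x = k"
      using beats[of x] by (meson leD)
  next
    assume "x = k"
    then show "x \<in> winners K c u"
      using k le unfolding winners_def by blast
  qed
  then show ?thesis
    by blast
qed

lemma seg_rule_eq_return_of_majority:
  assumes k: "k \<in> {1..K}" and C: "C \<subseteq> {..<c}" "c < 2 * card C"
    and nearest: "\<forall>t\<in>C. nearest_classes K (d div c) t dict w = {k}"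
  shows "seg_rule d c K dict w = return_pmf k"
proof -
  have "pmf_of_set (winners K c u) = return_pmf k"
    if u: "u \<in> set_pmf (Pi_pmf {..<c} 0 (\<lambda>t. pmf_of_set (nearest_classes K (d div c) t dict w)))"
    for u
  proof -
    have "1 \<le> K" using k by simp
    then have "u t \<in> nearest_classes K (d div c) t dict w" if "t < c" for t
      using u that nearest_classes_nonempty
      by (auto simp: set_Pi_pmf PiE_dflt_def nearest_classes_def)
    then have "\<forall>t\<in>C. u t = k"
      using C nearest by auto
    then show ?thesis
      using winners_eq_singleton_of_majority[OF k C] by (simp add: pmf_of_set_singleton)
  qed
  then show ?thesis
    unfolding seg_rule_def by (simp cong: bind_pmf_cong)
qed

lemma block_dist_nonneg: "0 \<le> block_dist s j x y"
  unfolding block_dist_def by (simp add: sum_nonneg)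

lemma block_dist_eq_0:
  assumes "\<forall>i\<in>{j * s ..< (j+1) * s}. x i = y i"
  shows "block_dist s j x y = 0"
  using assms unfolding block_dist_def by simp

lemma block_dist_pos:
  assumes "i \<in> {j * s ..< (j+1) * s}" "x i \<noteq> y i"
  shows "0 < block_dist s j x y"
proof -
  have "0 < (x i - y i)^2"
    using assms(2) by simp
  also have "\<dots> \<le> (\<Sum>i\<in>{j * s ..< (j+1) * s}. (x i - y i)^2)"
    using assms(1) by (intro member_le_sum) auto
  finally show ?thesis
    unfolding block_dist_def by simp
qed

lemma nearest_classes_eq_singleton:
  assumes k: "k \<in> {1..K}" and dist_k: "block_dist s j w (dict k) = 0"
    and dist_other: "\<forall>k'\<in>{1..K} - {k}. 0 < block_dist s j w (dict k')"
  shows "nearest_classes K s j dict w = {k}"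
proof -
  have "k' \<notin> nearest_classes K s j dict w" if "k' \<noteq> k" for k'
  proof
    assume "k' \<in> nearest_classes K s j dict w"
    then have "k' \<in> {1..K}" "block_dist s j w (dict k') \<le> block_dist s j w (dict k)"
      using k unfolding nearest_classes_def by auto
    moreover have "0 < block_dist s j w (dict k')"
      using dist_other that \<open>k' \<in> {1..K}\<close> by blast
    ultimately show False
      using dist_k by linarith
  qed
  moreover have "k \<in> nearest_classes K s j dict w"
    using k dist_k block_dist_nonneg unfolding nearest_classes_def by simp
  ultimately show ?thesis by blast
qed

lemma block_subset_lessThan:
  fixes d l t :: nat
  assumes "t < d div l"
  shows "{t * l ..< (t+1) * l} \<subseteq> {..<d}"
proof -
  have "(t+1) * l \<le> (d div l) * l"
    using assms by (intro mult_right_mono) auto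
  also have "\<dots> \<le> d"
    by (rule div_times_less_eq_dividend)
  finally show ?thesis by auto
qed

lemma nearest_classes_clean_block:
  assumes mm: "modelB_means d l K m" and t: "t < d div l" and K: "1 \<le> K"
    and Y: "\<forall>k\<le>K. \<forall>i\<in>{t * l ..< (t+1) * l}. Y k i = 0"
  shows "nearest_classes K l t (\<lambda>k i. m k i + Y k i) (\<lambda>i. m 1 i + Y 0 i) = {1}"
proof (rule nearest_classes_eq_singleton)
  show "block_dist l t (\<lambda>i. m 1 i + Y 0 i) (\<lambda>i. m 1 i + Y 1 i) = 0"
    using Y K by (intro block_dist_eq_0) simp
  show "\<forall>k\<in>{1..K} - {1}. 0 < block_dist l t (\<lambda>i. m 1 i + Y 0 i) (\<lambda>i. m k i + Y k i)"
  proof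
    fix k assume k: "k \<in> {1..K} - {1}"
    then have "\<exists>!i. i \<in> {t * l ..< (t+1) * l} \<and> m k i = 1"
      using mm t unfolding modelB_means_def by simp
    then obtain i where i: "i \<in> {t * l ..< (t+1) * l}" "m k i = 1"
      by blast
    moreover have "m 1 i = 0"
      using mm i(1) block_subset_lessThan[OF t] unfolding modelB_means_def by auto
    ultimately show "0 < block_dist l t (\<lambda>i. m 1 i + Y 0 i) (\<lambda>i. m k i + Y k i)"
      using Y k by (intro block_dist_pos[OF i(1)]) simp
  qed
qed (use K in simp)

lemma prob_bind_pmf_le_prob_of_null_outside:
  assumes "\<And>x. x \<notin> B \<Longrightarrow> measure_pmf.prob (f x) E = 0"
  shows "measure_pmf.prob (bind_pmf M f) E \<le> measure_pmf.prob M B"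
proof -
  have "emeasure (bind_pmf M f) E = (\<integral>\<^sup>+x. emeasure (f x) E \<partial>M)"
    by simp
  also have "\<dots> \<le> (\<integral>\<^sup>+x. indicator B x \<partial>M)"
  proof (intro nn_integral_mono)
    fix x
    show "emeasure (f x) E \<le> indicator B x"
      using assms[of x] by (cases "x \<in> B") (auto simp: measure_pmf.emeasure_le_1 measure_pmf.emeasure_eq_measure)
  qed
  also have "\<dots> = emeasure M B"
    by simp
  finally show ?thesis
    by (simp add: measure_pmf.emeasure_eq_measure)
qed

lemma prob_at_least_half_of_events_le:
  fixes M :: "'a pmf" and A :: "nat \<Rightarrow> 'a set"
  assumes "0 < c"
  shows "measure_pmf.prob M {x. real c \<le> 2 * real (card {t\<in>{..<c}. x \<in> A t})}
           \<le> 2 * (\<Sum>t<c. measure_pmf.prob M (A t)) / real c"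
proof -
  define D where "D x = (\<Sum>t<c. indicator (A t) x :: real)" for x
  have card_eq: "real (card {t\<in>{..<c}. x \<in> A t}) = D x" for x
    unfolding D_def by (simp add: indicator_def Int_def lessThan_iff)
  have integrable: "integrable M (indicator (A t) :: _ \<Rightarrow> real)" for t
    by (intro integrable_real_indicator) (auto simp: less_top[symmetric])
  have "measure_pmf.prob M {x. real c \<le> 2 * real (card {t\<in>{..<c}. x \<in> A t})}
      = measure M {x \<in> space M. real c / 2 \<le> D x}"
    unfolding card_eq by (simp add: field_simps)
  also have "\<dots> \<le> (\<integral>x. D x \<partial>M) / (real c / 2)"
    using assms integrable
    by (intro integral_Markov_inequality_measure[of _ _ UNIV] AE_I2)
       (auto simp: D_def intro: sum_nonneg)
  also have "(\<integral>x. D x \<partial>M) = (\<Sum>t<c. measure_pmf.prob M (A t))"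
    unfolding D_def using integrable by (subst Bochner_Integration.integral_sum) auto
  finally show ?thesis
    by (simp add: field_simps)
qed

lemma prob_noise_coord_nonzero:
  fixes k K i d :: nat
  assumes "k \<le> K" "i < d" "0 \<le> p" "p \<le> 1"
  shows "measure_pmf.prob (Pi_pmf {..K} (\<lambda>_. 0) (\<lambda>_. noise_pmf d N p)) {Y. Y k i \<noteq> 0} \<le> p"
proof -
  let ?Y = "Pi_pmf {..K} (\<lambda>_. 0) (\<lambda>_. noise_pmf d N p)"
  have "map_pmf (\<lambda>Y. Y k i) ?Y = map_pmf (\<lambda>f. f i) (map_pmf (\<lambda>Y. Y k) ?Y)"
    by (simp add: map_pmf_comp)
  also have "map_pmf (\<lambda>Y. Y k) ?Y = noise_pmf d N p"
    using assms by (subst Pi_pmf_component) auto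
  also have "map_pmf (\<lambda>f. f i) (noise_pmf d N p) = map_pmf (\<lambda>b. if b then N else 0) (bernoulli_pmf p)"
    unfolding noise_pmf_def using assms by (subst Pi_pmf_component) auto
  finally have coord: "map_pmf (\<lambda>Y. Y k i) ?Y = map_pmf (\<lambda>b. if b then N else 0) (bernoulli_pmf p)" .
  have "measure_pmf.prob ?Y {Y. Y k i \<noteq> 0} = measure_pmf.prob (map_pmf (\<lambda>Y. Y k i) ?Y) {x. x \<noteq> 0}"
    by (simp add: vimage_def)
  also have "\<dots> = measure_pmf.prob (bernoulli_pmf p) ((\<lambda>b. if b then N else 0) -` {x. x \<noteq> 0})"
    unfolding coord by simp
  also have "\<dots> \<le> measure_pmf.prob (bernoulli_pmf p) {True}"
    by (intro measure_pmf.finite_measure_mono) auto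
  also have "\<dots> = p"
    using assms by (simp add: measure_pmf_single)
  finally show ?thesis .
qed

lemma prob_noisy_block_le:
  fixes K :: nat
  assumes t: "t < d div l" and p: "0 \<le> p" "p \<le> 1"
  shows "measure_pmf.prob (Pi_pmf {..K} (\<lambda>_. 0) (\<lambda>_. noise_pmf d N p))
           {Y. \<exists>k\<le>K. \<exists>i\<in>{t * l ..< (t+1) * l}. Y k i \<noteq> 0} \<le> real (K+1) * real l * p"
proof -
  let ?Y = "Pi_pmf {..K} (\<lambda>_. 0) (\<lambda>_. noise_pmf d N p)"
  let ?I = "{..K} \<times> {t * l ..< (t+1) * l}"
  have noisy_eq: "{Y. \<exists>k\<le>K. \<exists>i\<in>{t * l ..< (t+1) * l}. Y k i \<noteq> 0}
      = (\<Union>x\<in>?I. {Y. Y (fst x) (snd x) \<noteq> 0})"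
    by fastforce
  have "measure_pmf.prob ?Y {Y. \<exists>k\<le>K. \<exists>i\<in>{t * l ..< (t+1) * l}. Y k i \<noteq> 0}
      \<le> (\<Sum>x\<in>?I. measure_pmf.prob ?Y {Y. Y (fst x) (snd x) \<noteq> 0})"
    unfolding noisy_eq by (rule measure_pmf.finite_measure_subadditive_finite) auto
  also have "\<dots> \<le> (\<Sum>x\<in>?I. p)"
    using block_subset_lessThan[OF t] p by (intro sum_mono prob_noise_coord_nonzero) auto
  also have "\<dots> = real (K+1) * real l * p"
    by (simp add: algebra_simps)
  finally show ?thesis .
qed

lemma modelB_error_le:
  fixes d l K :: nat
  assumes K: "1 \<le> K" and d: "1 \<le> d" and ld: "l dvd d" and p: "0 \<le> p" "p \<le> 1"
    and mm: "modelB_means d l K m"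
  shows "modelB_error d N p K m (d div l) \<le> 2 * real (K+1) * real l * p"
proof -
  define c where "c = d div l"
  define Noisy where
    "Noisy t = {Y :: nat \<Rightarrow> nat \<Rightarrow> real. \<exists>k\<le>K. \<exists>i\<in>{t * l ..< (t+1) * l}. Y k i \<noteq> 0}" for t
  let ?Y = "Pi_pmf {..K} (\<lambda>_. 0) (\<lambda>_. noise_pmf d N p)"
  have c: "0 < c" "d div c = l"
    using d ld unfolding c_def by (auto simp: dvd_def)
  have correct: "seg_rule d c K (\<lambda>k i. m k i + Y k i) (\<lambda>i. m 1 i + Y 0 i) = return_pmf 1"
    if few: "\<not> real c \<le> 2 * real (card {t\<in>{..<c}. Y \<in> Noisy t})" for Y
  proof (rule seg_rule_eq_return_of_majority)
    let ?C = "{t\<in>{..<c}. Y \<notin> Noisy t}"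
    have "card ?C = card ({..<c} - {t\<in>{..<c}. Y \<in> Noisy t})"
      by (rule arg_cong[where f = card]) auto
    also have "\<dots> = c - card {t\<in>{..<c}. Y \<in> Noisy t}"
      by (subst card_Diff_subset) auto
    finally have "card ?C = c - card {t\<in>{..<c}. Y \<in> Noisy t}" .
    moreover have "2 * card {t\<in>{..<c}. Y \<in> Noisy t} < c"
      using few by linarith
    ultimately show "c < 2 * card ?C"
      by linarith
    show "\<forall>t\<in>?C. nearest_classes K (d div c) t (\<lambda>k i. m k i + Y k i) (\<lambda>i. m 1 i + Y 0 i) = {1}"
    proof
      fix t assume "t \<in> ?C"
      then have "t < d div l" "\<forall>k\<le>K. \<forall>i\<in>{t * l ..< (t+1) * l}. Y k i = 0"
        unfolding Noisy_def c_def by auto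
      then show "nearest_classes K (d div c) t (\<lambda>k i. m k i + Y k i) (\<lambda>i. m 1 i + Y 0 i) = {1}"
        unfolding c(2) by (rule nearest_classes_clean_block[OF mm _ K])
    qed
  qed (use K in auto)
  have "modelB_error d N p K m (d div l)
      \<le> measure_pmf.prob ?Y {Y. real c \<le> 2 * real (card {t\<in>{..<c}. Y \<in> Noisy t})}"
    unfolding modelB_error_def c_def[symmetric]
    by (rule prob_bind_pmf_le_prob_of_null_outside) (use correct in auto)
  also have "\<dots> \<le> 2 * (\<Sum>t<c. measure_pmf.prob ?Y (Noisy t)) / real c"
    by (rule prob_at_least_half_of_events_le[OF c(1)])
  also have "\<dots> \<le> 2 * (\<Sum>t<c. real (K+1) * real l * p) / real c"
    unfolding Noisy_def c_def using p
    by (intro divide_right_mono mult_left_mono sum_mono prob_noisy_block_le) auto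
  also have "\<dots> = 2 * real (K+1) * real l * p"
    using c by simp
  finally show ?thesis .
qed

theorem proposition7:
  fixes d l :: "nat \<Rightarrow> nat" and N p :: "nat \<Rightarrow> real" and K :: nat
    and m :: "nat \<Rightarrow> nat \<Rightarrow> nat \<Rightarrow> real"
  assumes "2 \<le> K"
    and "\<forall>n. 1 \<le> d n \<and> 1 \<le> l n \<and> l n dvd d n \<and> N n > 0 \<and> 0 < p n \<and> p n < 1
              \<and> K \<le> l n + 1 \<and> modelB_means (d n) (l n) K (m n)"
    and "filterlim d at_top sequentially"
    and "filterlim l at_top sequentially"
    and "(\<lambda>n. real (l n) * p n) \<longlonglongrightarrow> 0"
  shows "(\<lambda>n. modelB_error (d n) (N n) (p n) K (m n) (d n div l n)) \<longlonglongrightarrow> 0"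
proof (rule Lim_null_comparison)
  have "0 \<le> modelB_error (d n) (N n) (p n) K (m n) (d n div l n)
      \<and> modelB_error (d n) (N n) (p n) K (m n) (d n div l n) \<le> 2 * real (K+1) * (real (l n) * p n)"
    for n
    using assms(1,2) modelB_error_le[of K "d n" "l n" "p n" "m n" "N n"]
    by (auto simp: modelB_error_def less_imp_le mult.assoc)
  then show "\<forall>\<^sub>F n in sequentially.
      norm (modelB_error (d n) (N n) (p n) K (m n) (d n div l n)) \<le> 2 * real (K+1) * (real (l n) * p n)"
    by (simp add: always_eventually)
  show "(\<lambda>n. 2 * real (K+1) * (real (l n) * p n)) \<longlonglongrightarrow> 0"
    using tendsto_mult_right_zero[OF assms(5)] by simp
qed

end
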